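(* Let $F$ be a field of characteristic $p\ge2$, let $l,m,n\ge2$ be integers with $p\mid n=lm$, and set $T=D_{n,l}\cap D_{n,m}\cap D_n^+$. (1) If $p\nmid l$, then for every monic original $f\in T$ there exist monic original $g^*,h^*\in F[x]$ of degrees $l$ and $m$, respectively, with $f=g^*\circ h^*$, $(g^* )'(h^* )'\ne0$, and $0\le\deg (h^* )'<m-l$. (2) If $p\mid l$, then for every monic original $f\in T$ there exist monic original $g,h\in F[x]$ of degrees $m$ and $l$, respectively, with $f=g\circ h$ and $\deg g'\le m-(m+1)/l$.
   Context: $g\circ h=g(h)$; monic means leading coefficient 1; original means value 0 at 0; $'$ is the formal derivative. A polynomial is decomposable if it equals $g\circ h$ with $\deg g,\deg h\ge2$; $D_n$ is the set of decomposable polynomials of degree $n$ in $F[x]$ and $D_n^+=D_n\setminus F[x^p]$. For a divisor $e$ of $n$, $D_{n,e}=\{g\circ h:\ \deg g=e,\ h\text{ monic},\ h(0)=0,\ \deg h=n/e\}$. *)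

theory Defs
  imports "HOL-Computational_Algebra.Polynomial"
begin

definition decomposable_deg :: "nat \<Rightarrow> 'a::field poly set" where
  "decomposable_deg n = {f. degree f = n \<and>
     (\<exists>g h. f = pcompose g h \<and> degree g \<ge> 2 \<and> degree h \<ge> 2)}"

definition poly_in_xp :: "nat \<Rightarrow> 'a::zero poly set" where
  "poly_in_xp p = {f. \<forall>i. coeff f i \<noteq> 0 \<longrightarrow> p dvd i}"

definition decomposable_plus :: "nat \<Rightarrow> 'a::field poly set" where
  "decomposable_plus n = decomposable_deg n - poly_in_xp CHAR('a)"

definition decomp_set :: "nat \<Rightarrow> nat \<Rightarrow> 'a::field poly set" where
  "decomp_set n e = {pcompose g h | g h. degree g = e \<and> lead_coeff h = 1 \<and>
     coeff h 0 = 0 \<and> degree h = n div e}"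

end

theory Submission
  imports Defs
begin

text \<open>
  Membership in \<open>D\<^sub>n\<^sup>+\<close> means exactly \<open>f' \<noteq> 0\<close>. For \<open>f = g \<circ> h\<close> with \<open>f' \<noteq> 0\<close> the
  chain rule gives \<open>deg f' = deg g' \<cdot> deg h + deg h'\<close>, and if \<open>p\<close> divides \<open>deg g\<close> the top
  coefficient of \<open>g'\<close> vanishes, so \<open>deg g' \<le> deg g - 2\<close> and hence \<open>deg f' < deg f - deg h\<close>.
  A monic original \<open>f \<in> T\<close> has two monic original decompositions, with outer components of
  degrees \<open>l\<close> and \<open>m\<close>. Apply the bound to the one whose outer degree is divisible by \<open>p\<close> and
  compare with the chain rule for the other: if \<open>p \<nmid> l\<close> (so \<open>p \<mid> m\<close>), the outer component of
  degree \<open>l\<close> has derivative of degree \<open>l - 1\<close>, which forces \<open>deg h' < m - l\<close>; if \<open>p \<mid> l\<close>, the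
  outer component \<open>g\<close> of degree \<open>m\<close> satisfies \<open>l \<cdot> deg g' + m < lm\<close>.
\<close>

lemma degree_pderiv_le: "degree (pderiv p) \<le> degree p - 1"
  by (rule degree_le) (auto simp: coeff_pderiv coeff_eq_0)

lemma coeff_pderiv_degree_minus_1:
  "coeff (pderiv p) (degree p - 1) = of_nat (degree p) * lead_coeff p"
  by (cases "degree p") (simp_all add: coeff_pderiv coeff_eq_0)

lemma degree_pderiv_of_not_char_dvd:
  fixes p :: "'a::idom poly"
  assumes "\<not> CHAR('a) dvd degree p"
  shows "degree (pderiv p) = degree p - 1"
proof -
  have "p \<noteq> 0" using assms by auto
  with assms have "coeff (pderiv p) (degree p - 1) \<noteq> 0"
    unfolding coeff_pderiv_degree_minus_1 by (simp add: of_nat_eq_0_iff_char_dvd)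
  then have "degree p - 1 \<le> degree (pderiv p)" by (rule le_degree)
  with degree_pderiv_le[of p] show ?thesis by linarith
qed

lemma degree_pderiv_less:
  fixes p :: "'a::idom poly"
  assumes "pderiv p \<noteq> 0"
  shows "degree (pderiv p) < degree p"
proof -
  have "degree p \<noteq> 0"
  proof
    assume "degree p = 0"
    then obtain c where "p = [:c:]" by (rule degree_eq_zeroE)
    with assms show False by simp
  qed
  with degree_pderiv_le[of p] show ?thesis by linarith
qed

lemma degree_pderiv_le_of_char_dvd:
  fixes p :: "'a::idom poly"
  assumes "CHAR('a) dvd degree p" and "pderiv p \<noteq> 0"
  shows "degree (pderiv p) + 2 \<le> degree p"
proof -
  have "coeff (pderiv p) (degree p - 1) = 0"
    using assms(1) unfolding coeff_pderiv_degree_minus_1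
    by (simp add: of_nat_eq_0_iff_char_dvd)
  with assms(2) have "degree (pderiv p) \<noteq> degree p - 1"
    by (metis leading_coeff_0_iff)
  with degree_pderiv_le[of p] degree_pderiv_less[OF assms(2)] show ?thesis by linarith
qed

lemma pderiv_eq_0_iff_poly_in_xp:
  fixes p :: "'a::idom poly"
  shows "pderiv p = 0 \<longleftrightarrow> p \<in> poly_in_xp CHAR('a)"
proof -
  have "pderiv p = 0 \<longleftrightarrow> (\<forall>i. of_nat (Suc i) * coeff p (Suc i) = (0::'a))"
    by (auto simp: poly_eq_iff coeff_pderiv)
  also have "\<dots> \<longleftrightarrow> (\<forall>i. coeff p i \<noteq> 0 \<longrightarrow> CHAR('a) dvd i)"
    by (metis dvd_0_right mult_eq_0_iff not0_implies_Suc of_nat_eq_0_iff_char_dvd)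
  finally show ?thesis unfolding poly_in_xp_def by simp
qed

lemma pderiv_pcompose_nonzeroD:
  fixes g h :: "'a::idom poly"
  assumes "pderiv (g \<circ>\<^sub>p h) \<noteq> 0"
  shows "pderiv g \<noteq> 0" and "pderiv h \<noteq> 0"
  using assms by (auto simp: pderiv_pcompose)

lemma degree_pderiv_pcompose:
  fixes g h :: "'a::idom poly"
  assumes "pderiv (g \<circ>\<^sub>p h) \<noteq> 0"
  shows "degree (pderiv (g \<circ>\<^sub>p h)) = degree (pderiv g) * degree h + degree (pderiv h)"
  using assms by (auto simp: pderiv_pcompose degree_mult_eq degree_pcompose)

lemma degree_pderiv_pcompose_less_of_char_dvd:
  fixes g h :: "'a::idom poly"
  assumes "pderiv (g \<circ>\<^sub>p h) \<noteq> 0" and "CHAR('a) dvd degree g"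
  shows "degree (pderiv (g \<circ>\<^sub>p h)) + degree h < degree (g \<circ>\<^sub>p h)"
proof -
  have "degree (pderiv g) + 2 \<le> degree g"
    using assms pderiv_pcompose_nonzeroD(1) by (blast intro: degree_pderiv_le_of_char_dvd)
  then have "(degree (pderiv g) + 2) * degree h \<le> degree g * degree h"
    by (rule mult_le_mono1)
  moreover have "degree (pderiv h) < degree h"
    using pderiv_pcompose_nonzeroD(2)[OF assms(1)] by (rule degree_pderiv_less)
  ultimately show ?thesis
    using assms(1) by (simp add: degree_pderiv_pcompose degree_pcompose algebra_simps)
qed

lemma decomp_set_monic_originalE:
  fixes f :: "'a::field poly"
  assumes "f \<in> decomp_set n e" and "lead_coeff f = 1" and "coeff f 0 = 0"
    and "n div e = d" and "d > 0"
  obtains g h where "f = g \<circ>\<^sub>p h" "degree g = e" "lead_coeff g = 1" "coeff g 0 = 0"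
    "degree h = d" "lead_coeff h = 1" "coeff h 0 = 0"
proof -
  obtain g h where gh: "f = g \<circ>\<^sub>p h" "degree g = e" "lead_coeff h = 1" "coeff h 0 = 0"
    "degree h = d"
    using assms(1,4) unfolding decomp_set_def by auto
  have "lead_coeff g = 1"
    using assms(2,5) gh by (simp add: lead_coeff_comp)
  moreover have "coeff g 0 = 0"
    using assms(3) gh by (simp add: coeff_pcompose_0 poly_0_coeff_0)
  ultimately show ?thesis using that gh by blast
qed

lemma degree_pderiv_pcompose_less_of_two_decompositions:
  fixes g h G H :: "'a::idom poly"
  assumes "g \<circ>\<^sub>p h = G \<circ>\<^sub>p H" and "pderiv (g \<circ>\<^sub>p h) \<noteq> 0"
    and "CHAR('a) dvd degree G" and "degree H = degree g"
  shows "degree (pderiv g) * degree h + degree (pderiv h) + degree g < degree g * degree h"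
proof -
  have "degree (pderiv (g \<circ>\<^sub>p h)) + degree H < degree (g \<circ>\<^sub>p h)"
    unfolding assms(1) using assms(1-3)
    by (intro degree_pderiv_pcompose_less_of_char_dvd) simp_all
  then show ?thesis
    using assms(2,4) by (simp add: degree_pderiv_pcompose degree_pcompose)
qed

lemma degree_pderiv_inner_less_of_two_decompositions:
  fixes g h G H :: "'a::idom poly"
  assumes "g \<circ>\<^sub>p h = G \<circ>\<^sub>p H" and "pderiv (g \<circ>\<^sub>p h) \<noteq> 0"
    and "CHAR('a) dvd degree G" and "degree H = degree g" and "\<not> CHAR('a) dvd degree g"
  shows "degree (pderiv h) + degree g < degree h"
proof -
  have "degree g \<noteq> 0"
    using assms(5) by (intro notI) simp
  then have "degree g * degree h = (degree g - 1) * degree h + degree h"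
    by (cases "degree g") simp_all
  with degree_pderiv_pcompose_less_of_two_decompositions[OF assms(1-4)] assms(5) show ?thesis
    by (simp add: degree_pderiv_of_not_char_dvd)
qed

theorem theorem4p18:
  fixes l m n p :: nat
  assumes charp: "CHAR('a::field) = p" and p2: "p \<ge> 2"
    and l2: "l \<ge> 2" and m2: "m \<ge> 2" and nlm: "n = l * m" and pn: "p dvd n"
  defines "T \<equiv> decomp_set n l \<inter> decomp_set n m \<inter> (decomposable_plus n :: 'a poly set)"
  shows "(\<not> p dvd l \<longrightarrow>
           (\<forall>f \<in> T. lead_coeff f = 1 \<and> coeff f 0 = 0 \<longrightarrow>
             (\<exists>g h. lead_coeff g = 1 \<and> coeff g 0 = 0 \<and> lead_coeff h = 1 \<and> coeff h 0 = 0 \<and>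
                degree g = l \<and> degree h = m \<and> f = pcompose g h \<and>
                pderiv g * pderiv h \<noteq> 0 \<and>
                int (degree (pderiv h)) < int m - int l)))
       \<and> (p dvd l \<longrightarrow>
           (\<forall>f \<in> T. lead_coeff f = 1 \<and> coeff f 0 = 0 \<longrightarrow>
             (\<exists>g h. lead_coeff g = 1 \<and> coeff g 0 = 0 \<and> lead_coeff h = 1 \<and> coeff h 0 = 0 \<and>
                degree g = m \<and> degree h = l \<and> f = pcompose g h \<and>
                real (degree (pderiv g)) \<le> real m - (real m + 1) / real l)))"
proof (intro conjI impI ballI)
  fix f assume "f \<in> T" and "lead_coeff f = 1 \<and> coeff f 0 = 0"
  then have f: "f \<in> decomp_set n l" "f \<in> decomp_set n m" "lead_coeff f = 1" "coeff f 0 = 0"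
    unfolding T_def by auto
  have "n div l = m" "n div m = l" "m > 0" "l > 0"
    using nlm l2 m2 by auto
  obtain g h where gh: "f = g \<circ>\<^sub>p h" "degree g = l" "lead_coeff g = 1" "coeff g 0 = 0"
    "degree h = m" "lead_coeff h = 1" "coeff h 0 = 0"
    by (rule decomp_set_monic_originalE[OF f(1,3,4) \<open>n div l = m\<close> \<open>m > 0\<close>])
  obtain G H where GH: "f = G \<circ>\<^sub>p H" "degree G = m" "lead_coeff G = 1" "coeff G 0 = 0"
    "degree H = l" "lead_coeff H = 1" "coeff H 0 = 0"
    by (rule decomp_set_monic_originalE[OF f(2,3,4) \<open>n div m = l\<close> \<open>l > 0\<close>])
  have f': "pderiv f \<noteq> 0"
    using \<open>f \<in> T\<close> unfolding T_def decomposable_plus_def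
    by (simp add: pderiv_eq_0_iff_poly_in_xp)
  {
    assume "\<not> p dvd l"
    moreover have "prime p"
      using charp p2 prime_CHAR_semidom[where 'a='a] by simp
    ultimately have "p dvd m"
      using pn nlm by (simp add: prime_dvd_mult_iff)
    with \<open>\<not> p dvd l\<close> have "degree (pderiv h) + l < m"
      using degree_pderiv_inner_less_of_two_decompositions[of g h G H] f' gh GH charp by simp
    moreover have "pderiv g * pderiv h \<noteq> 0"
      using f' gh(1) pderiv_pcompose_nonzeroD[of g h] by simp
    ultimately show "\<exists>g h. lead_coeff g = 1 \<and> coeff g 0 = 0 \<and> lead_coeff h = 1 \<and> coeff h 0 = 0 \<and>
                degree g = l \<and> degree h = m \<and> f = pcompose g h \<and>
                pderiv g * pderiv h \<noteq> 0 \<and> int (degree (pderiv h)) < int m - int l"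
      using gh by (intro exI[of _ g] exI[of _ h]) simp
  next
    assume "p dvd l"
    then have "degree (pderiv G) * l + degree (pderiv H) + m < m * l"
      using degree_pderiv_pcompose_less_of_two_decompositions[of G H g h] f' gh GH charp by simp
    then have "degree (pderiv G) * l + m + 1 \<le> m * l"
      by linarith
    then have "real (degree (pderiv G) * l + m + 1) \<le> real (m * l)"
      by (simp only: of_nat_le_iff)
    then have "real (degree (pderiv G)) \<le> real m - (real m + 1) / real l"
      using l2 by (simp add: field_simps)
    then show "\<exists>g h. lead_coeff g = 1 \<and> coeff g 0 = 0 \<and> lead_coeff h = 1 \<and> coeff h 0 = 0 \<and>
                degree g = m \<and> degree h = l \<and> f = pcompose g h \<and>
                real (degree (pderiv g)) \<le> real m - (real m + 1) / real l"
      using GH by blast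
  }
qed

end
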